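(* Run the generalized SMO algorithm with $\tau=0$ from some $\theta^0\in\mathcal F$ and suppose it never stops, i.e. $\Delta^k>0$ for all $k$. Then there are infinitely many iterations $k$ at which the update is not clipped.
   Context: Setup. Let $n,p,k_1,k_2\ge1$, $X\in\mathbb{R}^{n\times p}$ with rows $X_{i:}$, $y\in\mathbb{R}^n$, $C>0$, $\nu\in(0,1]$, $A\in\mathbb{R}^{k_1\times p}$, $b\in\mathbb{R}^{k_1}$, $\Gamma\in\mathbb{R}^{k_2\times p}$, $d\in\mathbb{R}^{k_2}$; $\mathbf e$ is the all-ones vector and $Q=XX^T\in\mathbb{R}^{n\times n}$. Dual variables are $\theta=(\alpha,\alpha^*,\gamma,\mu)\in\mathbb{R}^n\times\mathbb{R}^n\times\mathbb{R}^{k_1}\times\mathbb{R}^{k_2}$. Let $M$ be the $(2n+k_1+k_2)\times p$ matrix with row blocks $X,-X,A,-\Gamma$, $\bar Q=MM^T$, $l=(y,-y,b,-d)$, and $f(\theta)=\frac12\theta^T\bar Q\theta+l^T\theta$. The feasible set $\mathcal F$ consists of $\theta$ with $0\le\alpha_i,\alpha_i^*\le C/n$ for all $i$, $\mathbf e^T(\alpha+\alpha^* )\le C\nu$, $\mathbf e^T(\alpha-\alpha^* )=0$, $\gamma_j\ge0$ for all $j$. Generalized SMO algorithm. Assume the rows of $X$ are pairwise distinct and no row of $A$ or $\Gamma$ is zero. Let $I_{up}(\alpha)=\{i:\alpha_i<C/n\}$, $I_{low}(\alpha)=\{i:\alpha_i>0\}$, and $I^*_{up},I^*_{low}$ the same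 sets for $\alpha^*$. Fix $\tau\ge0$ and $\theta^0\in\mathcal F$. At iteration $k$, with all gradients evaluated at $\theta^k$: pick $i\in\arg\min_{I_{up}(\alpha^k)}\nabla_{\alpha_i}f$, $j\in\arg\max_{I_{low}(\alpha^k)}\nabla_{\alpha_j}f$ and set $\Delta_1=\max(\nabla_{\alpha_j}f-\nabla_{\alpha_i}f,0)$ ($\Delta_1=0$ if either set is empty); define $i^*,j^*,\Delta_2$ identically for $\alpha^*$; $\Delta_3=\max(-\min_{s}\nabla_{\gamma_s}f,0)$; $\Delta_4=\max_s|\nabla_{\mu_s}f|$; $\Delta^k=\max(\Delta_1,\Delta_2,\Delta_3,\Delta_4)$. If $\Delta^k\le\tau$ stop; otherwise update the first block (in the order $\alpha,\alpha^*,\gamma,\mu$) whose $\Delta_m$ equals $\Delta^k$, leaving all other coordinates unchanged: Block $\alpha$: $t_q=-\frac{\nabla_{\alpha_i}f-\nabla_{\alpha_j}f}{Q_{ii}+Q_{jj}-2Q_{ij}}$, $I_1=\max(-\alpha_i^k,\alpha_j^k-C/n)$, $I_2=\min(\alpha_j^k,C/n-\alpha_i^k)$, $t^*=\min(\max(I_1,t_q),I_2)$, $\alpha_i^{k+1}=\alpha_i^k+t^*$, $\alpha_j^{k+1}=\alpha_j^k-t^*$. Block $\alpha^*$: the same formulas with $\alpha^*$, $(i^*,j^* )$, $\nabla_{\alpha^*}f$ and the same matrix $Q$. Block $\gamma$: $u\in\arg\min_s\nabla_{\gamma_s}f$, $\gamma_u^{k+1}=\max\big(\gamma_u^k-\nabla_{\gamma_u}f/(AA^T)_{uu},0\big)$.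 Block $\mu$: $u\in\arg\max_s|\nabla_{\mu_s}f|$, $\mu_u^{k+1}=\mu_u^k-\nabla_{\mu_u}f/(\Gamma\Gamma^T)_{uu}$. Clipping. An update in block $\alpha$ or $\alpha^*$ is called clipped if $t^*\neq t_q$; an update in block $\gamma$ is clipped if $\gamma_u^k-\nabla_{\gamma_u}f(\theta^k)/(AA^T)_{uu}<0$; updates in block $\mu$ are never clipped. *)

theory Defs
  imports Complex_Main
begin

(* Indices are 0-based.  X :: nat => nat => real is the n x p data matrix (X i r, i<n, r<p),
   A is k1 x p, G (= Gamma) is k2 x p, y b d are vectors nat => real.
   The dual vector theta = (alpha, alpha*, gamma, mu) is stored as ONE function
   theta :: nat => real with
     alpha_i   = theta i             (i < n)
     alpha*_i  = theta (n + i)       (i < n)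
     gamma_s   = theta (2n + s)      (s < k1)
     mu_s      = theta (2n + k1 + s) (s < k2),
   i.e. exactly the coordinate order of the matrix M with row blocks X, -X, A, -Gamma.
   Coordinates >= 2n+k1+k2 are irrelevant (never read, never changed). *)

definition Mrow :: "nat \<Rightarrow> nat \<Rightarrow> (nat\<Rightarrow>nat\<Rightarrow>real) \<Rightarrow> (nat\<Rightarrow>nat\<Rightarrow>real) \<Rightarrow> (nat\<Rightarrow>nat\<Rightarrow>real)
    \<Rightarrow> nat \<Rightarrow> nat \<Rightarrow> real" where
  "Mrow n k1 X A G i r =
     (if i < n then X i r
      else if i < 2*n then - X (i - n) r
      else if i < 2*n + k1 then A (i - 2*n) r
      else - G (i - 2*n - k1) r)"

definition lvec :: "nat \<Rightarrow> nat \<Rightarrow> (nat\<Rightarrow>real) \<Rightarrow> (nat\<Rightarrow>real) \<Rightarrow> (nat\<Rightarrow>real) \<Rightarrow> nat \<Rightarrow> real" where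
  "lvec n k1 y b d i =
     (if i < n then y i
      else if i < 2*n then - y (i - n)
      else if i < 2*n + k1 then b (i - 2*n)
      else - d (i - 2*n - k1))"

definition gram :: "nat \<Rightarrow> (nat\<Rightarrow>nat\<Rightarrow>real) \<Rightarrow> nat \<Rightarrow> nat \<Rightarrow> real" where
  "gram p M i j = (\<Sum>r<p. M i r * M j r)"

definition fobj :: "nat \<Rightarrow> nat \<Rightarrow> nat \<Rightarrow> nat \<Rightarrow> (nat\<Rightarrow>nat\<Rightarrow>real) \<Rightarrow> (nat\<Rightarrow>real) \<Rightarrow> (nat\<Rightarrow>nat\<Rightarrow>real)
    \<Rightarrow> (nat\<Rightarrow>real) \<Rightarrow> (nat\<Rightarrow>nat\<Rightarrow>real) \<Rightarrow> (nat\<Rightarrow>real) \<Rightarrow> (nat\<Rightarrow>real) \<Rightarrow> real" where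
  "fobj n p k1 k2 X y A b G d \<theta> =
     (1/2) * (\<Sum>i<2*n+k1+k2. \<Sum>j<2*n+k1+k2. \<theta> i * gram p (Mrow n k1 X A G) i j * \<theta> j)
     + (\<Sum>i<2*n+k1+k2. lvec n k1 y b d i * \<theta> i)"

definition grad :: "nat \<Rightarrow> nat \<Rightarrow> nat \<Rightarrow> nat \<Rightarrow> (nat\<Rightarrow>nat\<Rightarrow>real) \<Rightarrow> (nat\<Rightarrow>real) \<Rightarrow> (nat\<Rightarrow>nat\<Rightarrow>real)
    \<Rightarrow> (nat\<Rightarrow>real) \<Rightarrow> (nat\<Rightarrow>nat\<Rightarrow>real) \<Rightarrow> (nat\<Rightarrow>real) \<Rightarrow> (nat\<Rightarrow>real) \<Rightarrow> nat \<Rightarrow> real" where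
  "grad n p k1 k2 X y A b G d \<theta> i =
     (\<Sum>j<2*n+k1+k2. gram p (Mrow n k1 X A G) i j * \<theta> j) + lvec n k1 y b d i"

definition feasible :: "nat \<Rightarrow> nat \<Rightarrow> real \<Rightarrow> real \<Rightarrow> (nat\<Rightarrow>real) \<Rightarrow> bool" where
  "feasible n k1 C \<nu> \<theta> \<longleftrightarrow>
     (\<forall>i<n. 0 \<le> \<theta> i \<and> \<theta> i \<le> C / real n \<and> 0 \<le> \<theta> (n+i) \<and> \<theta> (n+i) \<le> C / real n) \<and>
     (\<Sum>i<n. \<theta> i + \<theta> (n+i)) \<le> C * \<nu> \<and>
     (\<Sum>i<n. \<theta> i - \<theta> (n+i)) = 0 \<and>
     (\<forall>s<k1. 0 \<le> \<theta> (2*n+s))"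

(* I_up and I_low for the block starting at offset off (off = 0: alpha, off = n: alpha* ) *)
definition Iup :: "nat \<Rightarrow> real \<Rightarrow> nat \<Rightarrow> (nat\<Rightarrow>real) \<Rightarrow> nat set" where
  "Iup n C off \<theta> = {i. i < n \<and> \<theta> (off+i) < C / real n}"

definition Ilow :: "nat \<Rightarrow> nat \<Rightarrow> (nat\<Rightarrow>real) \<Rightarrow> nat set" where
  "Ilow n off \<theta> = {i. i < n \<and> 0 < \<theta> (off+i)}"

definition Dpair :: "nat \<Rightarrow> real \<Rightarrow> nat \<Rightarrow> (nat\<Rightarrow>real) \<Rightarrow> (nat\<Rightarrow>real) \<Rightarrow> real" where
  "Dpair n C off g \<theta> =
     (if Iup n C off \<theta> = {} \<or> Ilow n off \<theta> = {} then 0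
      else max (Max ((\<lambda>j. g (off+j)) ` Ilow n off \<theta>) - Min ((\<lambda>i. g (off+i)) ` Iup n C off \<theta>)) 0)"

definition D3 :: "nat \<Rightarrow> nat \<Rightarrow> (nat\<Rightarrow>real) \<Rightarrow> real" where
  "D3 n k1 g = max (- Min ((\<lambda>s. g (2*n+s)) ` {..<k1})) 0"

definition D4 :: "nat \<Rightarrow> nat \<Rightarrow> nat \<Rightarrow> (nat\<Rightarrow>real) \<Rightarrow> real" where
  "D4 n k1 k2 g = Max ((\<lambda>s. \<bar>g (2*n+k1+s)\<bar>) ` {..<k2})"

(* Pair update in block alpha (off = 0) or alpha* (off = n) with matrix Q = XX^T.
   cl is the clipping flag (t* \<noteq> t_q). *)
definition pair_update :: "nat \<Rightarrow> nat \<Rightarrow> real \<Rightarrow> (nat\<Rightarrow>nat\<Rightarrow>real) \<Rightarrow> nat \<Rightarrow> (nat\<Rightarrow>real)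
    \<Rightarrow> (nat\<Rightarrow>real) \<Rightarrow> (nat\<Rightarrow>real) \<Rightarrow> bool \<Rightarrow> bool" where
  "pair_update n p C X off g \<theta> \<theta>' cl \<longleftrightarrow>
     (\<exists>i j. i \<in> Iup n C off \<theta> \<and> (\<forall>i'\<in>Iup n C off \<theta>. g (off+i) \<le> g (off+i')) \<and>
            j \<in> Ilow n off \<theta> \<and> (\<forall>j'\<in>Ilow n off \<theta>. g (off+j') \<le> g (off+j)) \<and>
       (let Q = gram p X;
            tq = - (g (off+i) - g (off+j)) / (Q i i + Q j j - 2 * Q i j);
            I1 = max (- \<theta> (off+i)) (\<theta> (off+j) - C / real n);
            I2 = min (\<theta> (off+j)) (C / real n - \<theta> (off+i));
            ts = min (max I1 tq) I2
        in \<theta>' = \<theta>(off+i := \<theta> (off+i) + ts, off+j := \<theta> (off+j) - ts) \<and> cl = (ts \<noteq> tq)))"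

(* One iteration of the generalized SMO algorithm with tau = 0 that does not stop:
   from theta to theta', with clipping flag cl.  The nondeterministic choices of
   argmin/argmax indices are existentially quantified. *)
definition smo_step :: "nat \<Rightarrow> nat \<Rightarrow> nat \<Rightarrow> nat \<Rightarrow> (nat\<Rightarrow>nat\<Rightarrow>real) \<Rightarrow> (nat\<Rightarrow>real) \<Rightarrow> real
    \<Rightarrow> (nat\<Rightarrow>nat\<Rightarrow>real) \<Rightarrow> (nat\<Rightarrow>real) \<Rightarrow> (nat\<Rightarrow>nat\<Rightarrow>real) \<Rightarrow> (nat\<Rightarrow>real)
    \<Rightarrow> (nat\<Rightarrow>real) \<Rightarrow> (nat\<Rightarrow>real) \<Rightarrow> bool \<Rightarrow> bool" where
  "smo_step n p k1 k2 X y C A b G d \<theta> \<theta>' cl \<longleftrightarrow>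
     (let g = grad n p k1 k2 X y A b G d \<theta>;
          d1 = Dpair n C 0 g \<theta>; d2 = Dpair n C n g \<theta>; d3 = D3 n k1 g; d4 = D4 n k1 k2 g;
          D = max (max d1 d2) (max d3 d4)
      in 0 < D \<and>
         ((d1 = D \<and> pair_update n p C X 0 g \<theta> \<theta>' cl) \<or>
          (d1 \<noteq> D \<and> d2 = D \<and> pair_update n p C X n g \<theta> \<theta>' cl) \<or>
          (d1 \<noteq> D \<and> d2 \<noteq> D \<and> d3 = D \<and>
             (\<exists>u<k1. (\<forall>s<k1. g (2*n+u) \<le> g (2*n+s)) \<and>
                (let v = \<theta> (2*n+u) - g (2*n+u) / gram p A u u
                 in \<theta>' = \<theta>(2*n+u := max v 0) \<and> cl = (v < 0)))) \<or>
          (d1 \<noteq> D \<and> d2 \<noteq> D \<and> d3 \<noteq> D \<and> d4 = D \<and>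
             (\<exists>u<k2. (\<forall>s<k2. \<bar>g (2*n+k1+s)\<bar> \<le> \<bar>g (2*n+k1+u)\<bar>) \<and>
                \<theta>' = \<theta>(2*n+k1+u := \<theta> (2*n+k1+u) - g (2*n+k1+u) / gram p G u u) \<and>
                cl = False))))"

end

theory Submission
  imports Defs "HOL-Combinatorics.Permutations" "HOL-Library.Infinite_Set"
begin

text \<open>A clipped update cannot occur in the \<open>\<mu>\<close> block, and not in the \<open>\<gamma>\<close> block either: there the
selected gradient is negative, so the unprojected value already exceeds \<open>\<gamma>\<^sub>u \<ge> 0\<close>. Hence it is a
pair update whose step \<open>t\<^sup>*\<close> is cut down to the upper end \<open>I\<^sub>2\<close> of the feasible interval. Because the
rows of \<open>X\<close> are distinct the curvature \<open>Q\<^sub>i\<^sub>i + Q\<^sub>j\<^sub>j - 2Q\<^sub>i\<^sub>j\<close> is positive, so \<open>0 < t\<^sup>* < t\<^sub>q\<close> and \<open>f\<close>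
strictly decreases. Moreover the cut puts a coordinate at a bound: either the set of free
\<open>\<alpha>\<close>/\<open>\<alpha>\<^sup>*\<close>-coordinates (those strictly between \<open>0\<close> and \<open>C/n\<close>) shrinks, or the step merely exchanges the
values of the two coordinates. If from some point on every update were clipped, the number of free
coordinates would eventually be constant, after which the iterates would be permutations of one
vector, hence finitely many; this contradicts the strict decrease of \<open>f\<close>.\<close>

subsection \<open>The objective along a pair direction\<close>

lemma sum_indicator_diff:
  fixes h :: "nat \<Rightarrow> real"
  assumes "u < N" "v < N" "u \<noteq> v"
  shows "(\<Sum>i<N. ((if i = u then 1 else 0) - (if i = v then 1 else 0)) * h i) = h u - h v"
proof -
  have "(\<Sum>i<N. ((if i = u then 1 else 0) - (if i = v then 1 else 0)) * h i)
      = (\<Sum>i<N. (if i = u then h i else 0) - (if i = v then h i else 0))"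
    by (rule sum.cong) auto
  also have "\<dots> = h u - h v" using assms by (simp add: sum_subtractf)
  finally show ?thesis .
qed

lemma quadratic_form_pair_shift:
  fixes Q :: "nat \<Rightarrow> nat \<Rightarrow> real" and \<theta> :: "nat \<Rightarrow> real"
  assumes sym: "\<And>i j. Q i j = Q j i" and uv: "u < N" "v < N" "u \<noteq> v"
  defines "e \<equiv> \<lambda>j. ((if j = u then 1 else 0) - (if j = v then 1 else 0) :: real)"
  shows "(\<Sum>i<N. \<Sum>j<N. (\<theta> i + t * e i) * Q i j * (\<theta> j + t * e j))
       = (\<Sum>i<N. \<Sum>j<N. \<theta> i * Q i j * \<theta> j)
         + 2 * t * ((\<Sum>j<N. Q u j * \<theta> j) - (\<Sum>j<N. Q v j * \<theta> j))
         + t\<^sup>2 * (Q u u + Q v v - 2 * Q u v)"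
proof -
  have e: "\<And>h. (\<Sum>i<N. e i * h i) = h u - h v"
    unfolding e_def using sum_indicator_diff[OF uv] .
  have expand: "\<And>i j. (\<theta> i + t * e i) * Q i j * (\<theta> j + t * e j) = \<theta> i * Q i j * \<theta> j
       + t * (e i * (Q i j * \<theta> j)) + t * (e j * (Q j i * \<theta> i)) + t\<^sup>2 * (e i * (e j * Q i j))"
    using sym by (simp add: algebra_simps power2_eq_square)
  have "(\<Sum>i<N. \<Sum>j<N. (\<theta> i + t * e i) * Q i j * (\<theta> j + t * e j))
      = (\<Sum>i<N. \<Sum>j<N. \<theta> i * Q i j * \<theta> j) + t * (\<Sum>i<N. e i * (\<Sum>j<N. Q i j * \<theta> j))
        + t * (\<Sum>i<N. \<Sum>j<N. e j * (Q j i * \<theta> i)) + t\<^sup>2 * (\<Sum>i<N. e i * (\<Sum>j<N. e j * Q i j))"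
    unfolding expand by (simp add: sum.distrib sum_distrib_left)
  also have "(\<Sum>i<N. e i * (\<Sum>j<N. Q i j * \<theta> j)) = (\<Sum>j<N. Q u j * \<theta> j) - (\<Sum>j<N. Q v j * \<theta> j)"
    by (rule e)
  also have "(\<Sum>i<N. \<Sum>j<N. e j * (Q j i * \<theta> i)) = (\<Sum>i<N. Q u i * \<theta> i - Q v i * \<theta> i)"
    by (rule sum.cong) (auto simp: e)
  also have "\<dots> = (\<Sum>j<N. Q u j * \<theta> j) - (\<Sum>j<N. Q v j * \<theta> j)"
    by (simp add: sum_subtractf)
  also have "(\<Sum>i<N. e i * (\<Sum>j<N. e j * Q i j)) = Q u u + Q v v - 2 * Q u v"
    by (simp add: e sym[of v u])
  finally show ?thesis by (simp add: algebra_simps)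
qed

lemma gram_sym: "gram p M i j = gram p M j i"
  unfolding gram_def by (simp add: mult.commute)

lemma fobj_pair_shift:
  assumes "u < 2*n+k1+k2" "v < 2*n+k1+k2" "u \<noteq> v"
  shows "fobj n p k1 k2 X y A b G d (\<theta>(u := \<theta> u + t, v := \<theta> v - t))
    = fobj n p k1 k2 X y A b G d \<theta>
      + t * (grad n p k1 k2 X y A b G d \<theta> u - grad n p k1 k2 X y A b G d \<theta> v)
      + t\<^sup>2 / 2 * (gram p (Mrow n k1 X A G) u u + gram p (Mrow n k1 X A G) v v
                   - 2 * gram p (Mrow n k1 X A G) u v)"
proof -
  let ?N = "2*n+k1+k2" and ?Q = "gram p (Mrow n k1 X A G)" and ?l = "lvec n k1 y b d"
  define e where "e = (\<lambda>j. ((if j = u then 1 else 0) - (if j = v then 1 else 0) :: real))"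
  have shift: "\<theta>(u := \<theta> u + t, v := \<theta> v - t) = (\<lambda>j. \<theta> j + t * e j)"
    using assms(3) by (auto simp: fun_eq_iff e_def)
  have linear: "(\<Sum>i<?N. ?l i * (\<theta> i + t * e i)) = (\<Sum>i<?N. ?l i * \<theta> i) + t * (?l u - ?l v)"
  proof -
    have "(\<Sum>i<?N. ?l i * (\<theta> i + t * e i)) = (\<Sum>i<?N. ?l i * \<theta> i) + t * (\<Sum>i<?N. e i * ?l i)"
      by (simp add: algebra_simps sum.distrib sum_distrib_left)
    then show ?thesis unfolding e_def sum_indicator_diff[OF assms] .
  qed
  have "fobj n p k1 k2 X y A b G d (\<theta>(u := \<theta> u + t, v := \<theta> v - t))
      = 1/2 * (\<Sum>i<?N. \<Sum>j<?N. (\<theta> i + t * e i) * ?Q i j * (\<theta> j + t * e j))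
        + (\<Sum>i<?N. ?l i * (\<theta> i + t * e i))"
    unfolding shift fobj_def ..
  also have "\<dots> = fobj n p k1 k2 X y A b G d \<theta>
      + t * (grad n p k1 k2 X y A b G d \<theta> u - grad n p k1 k2 X y A b G d \<theta> v)
      + t\<^sup>2 / 2 * (?Q u u + ?Q v v - 2 * ?Q u v)"
    unfolding e_def quadratic_form_pair_shift[OF gram_sym assms] linear[unfolded e_def] fobj_def grad_def
    by (simp add: algebra_simps)
  finally show ?thesis .
qed

lemma fobj_pair_shift_less:
  assumes "u < 2*n+k1+k2" "v < 2*n+k1+k2" "u \<noteq> v" "0 < t"
    and "t * (gram p (Mrow n k1 X A G) u u + gram p (Mrow n k1 X A G) v v - 2 * gram p (Mrow n k1 X A G) u v)
         < 2 * (grad n p k1 k2 X y A b G d \<theta> v - grad n p k1 k2 X y A b G d \<theta> u)"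
  shows "fobj n p k1 k2 X y A b G d (\<theta>(u := \<theta> u + t, v := \<theta> v - t)) < fobj n p k1 k2 X y A b G d \<theta>"
proof -
  let ?q = "gram p (Mrow n k1 X A G) u u + gram p (Mrow n k1 X A G) v v - 2 * gram p (Mrow n k1 X A G) u v"
  let ?\<delta> = "grad n p k1 k2 X y A b G d \<theta> v - grad n p k1 k2 X y A b G d \<theta> u"
  have "t / 2 * (t * ?q - 2 * ?\<delta>) < 0"
    using assms(4,5) by (simp add: mult_pos_neg)
  then show ?thesis
    unfolding fobj_pair_shift[OF assms(1-3)] by (simp add: algebra_simps power2_eq_square)
qed

lemma gram_Mrow_pair_block:
  assumes "off = 0 \<or> off = n" "s < n" "t < n"
  shows "gram p (Mrow n k1 X A G) (off+s) (off+t) = gram p X s t"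
  using assms by (auto simp: gram_def Mrow_def)

lemma gram_curvature_pos:
  assumes "r < p" "M i r \<noteq> M j r"
  shows "0 < gram p M i i + gram p M j j - 2 * gram p M i j"
proof -
  have "gram p M i i + gram p M j j - 2 * gram p M i j = (\<Sum>r<p. (M i r - M j r)\<^sup>2)"
    unfolding gram_def
    by (simp add: power2_eq_square algebra_simps sum.distrib sum_subtractf sum_distrib_left)
  also have "0 < \<dots>"
    by (rule sum_pos2[where i=r]) (use assms in auto)
  finally show ?thesis .
qed

subsection \<open>Invariance of the box constraints\<close>

definition box_feasible :: "nat \<Rightarrow> nat \<Rightarrow> real \<Rightarrow> (nat \<Rightarrow> real) \<Rightarrow> bool" where
  "box_feasible n k1 C \<theta> \<longleftrightarrow>
     (\<forall>c<2*n. 0 \<le> \<theta> c \<and> \<theta> c \<le> C / real n) \<and> (\<forall>s<k1. 0 \<le> \<theta> (2*n+s))"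

lemma feasible_imp_box_feasible:
  assumes "feasible n k1 C \<nu> \<theta>"
  shows "box_feasible n k1 C \<theta>"
proof -
  have "0 \<le> \<theta> c \<and> \<theta> c \<le> C / real n" if "c < 2*n" for c
  proof (cases "c < n")
    case False
    then have "c = n + (c - n)" "c - n < n" using that by auto
    then show ?thesis using assms unfolding feasible_def by metis
  qed (use assms in \<open>auto simp: feasible_def\<close>)
  then show ?thesis using assms by (auto simp: box_feasible_def feasible_def)
qed

lemma pair_update_elim:
  assumes "pair_update n p C X off g \<theta> \<theta>' cl"
  obtains i j t\<^sub>q t where "i \<in> Iup n C off \<theta>" "\<forall>i'\<in>Iup n C off \<theta>. g (off+i) \<le> g (off+i')"
    "j \<in> Ilow n off \<theta>" "\<forall>j'\<in>Ilow n off \<theta>. g (off+j') \<le> g (off+j)"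
    "t\<^sub>q = - (g (off+i) - g (off+j)) / (gram p X i i + gram p X j j - 2 * gram p X i j)"
    "t = min (max (max (- \<theta> (off+i)) (\<theta> (off+j) - C / real n)) t\<^sub>q)
             (min (\<theta> (off+j)) (C / real n - \<theta> (off+i)))"
    "\<theta>' = \<theta>(off+i := \<theta> (off+i) + t, off+j := \<theta> (off+j) - t)" "cl = (t \<noteq> t\<^sub>q)"
  using assms unfolding pair_update_def Let_def by blast

lemma pair_update_box_feasible:
  assumes box: "box_feasible n k1 C \<theta>" and off: "off = 0 \<or> off = n"
    and upd: "pair_update n p C X off g \<theta> \<theta>' cl"
  shows "box_feasible n k1 C \<theta>'"
proof -
  obtain i j t\<^sub>q t where i: "i \<in> Iup n C off \<theta>" and j: "j \<in> Ilow n off \<theta>"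
    and t: "t = min (max (max (- \<theta> (off+i)) (\<theta> (off+j) - C / real n)) t\<^sub>q)
                     (min (\<theta> (off+j)) (C / real n - \<theta> (off+i)))"
    and \<theta>': "\<theta>' = \<theta>(off+i := \<theta> (off+i) + t, off+j := \<theta> (off+j) - t)"
    using upd by (rule pair_update_elim) blast
  have lt: "off+i < 2*n" "off+j < 2*n"
    using off i j by (auto simp: Iup_def Ilow_def)
  then have "0 \<le> \<theta> (off+i)" "\<theta> (off+j) \<le> C / real n"
    using box by (auto simp: box_feasible_def)
  then have "- \<theta> (off+i) \<le> t" "\<theta> (off+j) - C / real n \<le> t"
    "t \<le> \<theta> (off+j)" "t \<le> C / real n - \<theta> (off+i)"
    using t i j by (auto simp: min_def max_def Iup_def Ilow_def)
  then show ?thesis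
    using box lt unfolding box_feasible_def \<theta>' by auto
qed

lemma smo_step_box_feasible:
  assumes box: "box_feasible n k1 C \<theta>" and step: "smo_step n p k1 k2 X y C A b G d \<theta> \<theta>' cl"
  shows "box_feasible n k1 C \<theta>'"
proof -
  let ?g = "grad n p k1 k2 X y A b G d \<theta>"
  from step consider "pair_update n p C X 0 ?g \<theta> \<theta>' cl" | "pair_update n p C X n ?g \<theta> \<theta>' cl"
    | u where "u < k1" "\<theta>' = \<theta>(2*n+u := max (\<theta> (2*n+u) - ?g (2*n+u) / gram p A u u) 0)"
    | u where "\<theta>' = \<theta>(2*n+k1+u := \<theta> (2*n+k1+u) - ?g (2*n+k1+u) / gram p G u u)"
    unfolding smo_step_def Let_def by blast
  then show ?thesis
  proof cases
    case 1
    then show ?thesis using pair_update_box_feasible[OF box] by blast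
  next
    case 2
    then show ?thesis using pair_update_box_feasible[OF box] by blast
  qed (use box in \<open>auto simp: box_feasible_def\<close>)
qed

subsection \<open>Clipped updates\<close>

definition free_coords :: "nat \<Rightarrow> real \<Rightarrow> (nat \<Rightarrow> real) \<Rightarrow> nat set" where
  "free_coords n C \<theta> = {c. c < 2*n \<and> 0 < \<theta> c \<and> \<theta> c < C / real n}"

lemma finite_free_coords: "finite (free_coords n C \<theta>)"
  by (rule finite_subset[of _ "{..<2*n}"]) (auto simp: free_coords_def)

lemma card_free_coords_comp_permutes:
  assumes "\<pi> permutes {..<2*n}"
  shows "card (free_coords n C (\<theta> \<circ> \<pi>)) = card (free_coords n C \<theta>)"
proof -
  have "\<pi> ` free_coords n C (\<theta> \<circ> \<pi>) = free_coords n C \<theta>"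
    using permutes_in_image[OF assms] permutes_surj[OF assms]
    by (auto simp: free_coords_def image_iff) (metis surj_def)
  moreover have "inj_on \<pi> (free_coords n C (\<theta> \<circ> \<pi>))"
    using permutes_inj[OF assms] by (rule inj_on_subset) simp
  ultimately show ?thesis by (metis card_image)
qed

lemma clipped_step_eq_upper_bound:
  fixes a\<^sub>i a\<^sub>j c t\<^sub>q t :: real
  assumes "0 \<le> a\<^sub>i" "a\<^sub>j \<le> c" "0 < t\<^sub>q"
    and "t = min (max (max (- a\<^sub>i) (a\<^sub>j - c)) t\<^sub>q) (min a\<^sub>j (c - a\<^sub>i))" "t \<noteq> t\<^sub>q"
  shows "t = min a\<^sub>j (c - a\<^sub>i)" "t < t\<^sub>q"
  using assms by (auto simp: min_def max_def)

lemma free_coords_after_clipped_step: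
  fixes \<theta> :: "nat \<Rightarrow> real"
  assumes uv: "u < 2*n" "v < 2*n" "u \<noteq> v"
    and bounds: "0 \<le> \<theta> u" "\<theta> u < C / real n" "0 < \<theta> v" "\<theta> v \<le> C / real n"
    and t: "t = min (\<theta> v) (C / real n - \<theta> u)"
  defines "\<theta>' \<equiv> \<theta>(u := \<theta> u + t, v := \<theta> v - t)"
  shows "free_coords n C \<theta>' \<subset> free_coords n C \<theta> \<or> \<theta>' = \<theta> \<circ> transpose u v"
proof -
  have swap: "\<theta>' = \<theta> \<circ> transpose u v" if "\<theta> u + t = \<theta> v" "\<theta> v - t = \<theta> u"
    using that uv(3) by (auto simp: \<theta>'_def fun_eq_iff transpose_def)
  consider "\<theta> u = 0" | "\<theta> v = C / real n" | "u \<in> free_coords n C \<theta>" "v \<in> free_coords n C \<theta>"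
    using uv bounds by (force simp: free_coords_def)
  then show ?thesis
  proof cases
    case 3
    have "free_coords n C \<theta>' \<subseteq> free_coords n C \<theta>"
      using 3 by (auto simp: free_coords_def \<theta>'_def split: if_splits)
    moreover have "v \<notin> free_coords n C \<theta>' \<or> u \<notin> free_coords n C \<theta>'"
      using t uv(3) by (auto simp: free_coords_def \<theta>'_def min_def)
    ultimately show ?thesis using 3 by blast
  qed (use t bounds swap in auto)
qed

lemma Dpair_pos_imp_violating_pair:
  assumes "0 < Dpair n C off g \<theta>"
  shows "\<exists>i\<in>Iup n C off \<theta>. \<exists>j\<in>Ilow n off \<theta>. g (off+i) < g (off+j)"
proof -
  let ?up = "(\<lambda>i. g (off+i)) ` Iup n C off \<theta>" and ?low = "(\<lambda>j. g (off+j)) ` Ilow n off \<theta>"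
  have ne: "Iup n C off \<theta> \<noteq> {}" "Ilow n off \<theta> \<noteq> {}"
    using assms by (auto simp: Dpair_def split: if_splits)
  have fin: "finite (Iup n C off \<theta>)" "finite (Ilow n off \<theta>)"
    by (auto simp: Iup_def Ilow_def)
  have "Min ?up \<in> ?up" "Max ?low \<in> ?low"
    using fin ne by (auto intro!: Min_in Max_in)
  then obtain i j where "Min ?up = g (off+i)" "i \<in> Iup n C off \<theta>"
    and "Max ?low = g (off+j)" "j \<in> Ilow n off \<theta>"
    by (elim imageE)
  moreover have "Min ?up < Max ?low"
    using assms ne by (auto simp: Dpair_def max_def split: if_splits)
  ultimately show ?thesis by auto
qed

lemma pair_update_clipped_descent:
  assumes box: "box_feasible n k1 C \<theta>" and off: "off = 0 \<or> off = n"
    and g: "g = grad n p k1 k2 X y A b G d \<theta>"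
    and viol: "\<exists>i\<in>Iup n C off \<theta>. \<exists>j\<in>Ilow n off \<theta>. g (off+i) < g (off+j)"
    and rows: "\<forall>i<n. \<forall>j<n. i \<noteq> j \<longrightarrow> (\<exists>r<p. X i r \<noteq> X j r)"
    and upd: "pair_update n p C X off g \<theta> \<theta>' True"
  shows "fobj n p k1 k2 X y A b G d \<theta>' < fobj n p k1 k2 X y A b G d \<theta>"
    and "free_coords n C \<theta>' \<subset> free_coords n C \<theta> \<or> (\<exists>\<pi>. \<pi> permutes {..<2*n} \<and> \<theta>' = \<theta> \<circ> \<pi>)"
proof -
  obtain i j t\<^sub>q t where i: "i \<in> Iup n C off \<theta>" "\<forall>i'\<in>Iup n C off \<theta>. g (off+i) \<le> g (off+i')"
    and j: "j \<in> Ilow n off \<theta>" "\<forall>j'\<in>Ilow n off \<theta>. g (off+j') \<le> g (off+j)"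
    and t\<^sub>q: "t\<^sub>q = - (g (off+i) - g (off+j)) / (gram p X i i + gram p X j j - 2 * gram p X i j)"
    and t: "t = min (max (max (- \<theta> (off+i)) (\<theta> (off+j) - C / real n)) t\<^sub>q)
                     (min (\<theta> (off+j)) (C / real n - \<theta> (off+i)))"
    and \<theta>': "\<theta>' = \<theta>(off+i := \<theta> (off+i) + t, off+j := \<theta> (off+j) - t)" and clipped: "t \<noteq> t\<^sub>q"
    using upd by (rule pair_update_elim) blast
  define q where "q = gram p X i i + gram p X j j - 2 * gram p X i j"
  have gij: "g (off+i) < g (off+j)" using viol i j by force
  then have "i \<noteq> j" by auto
  have ij: "i < n" "j < n" "\<theta> (off+i) < C / real n" "0 < \<theta> (off+j)"
    using i j by (auto simp: Iup_def Ilow_def)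
  have lt: "off+i < 2*n" "off+j < 2*n" using off ij by auto
  have bounds: "0 \<le> \<theta> (off+i)" "\<theta> (off+j) \<le> C / real n"
    using box lt by (auto simp: box_feasible_def)
  have "0 < q"
    unfolding q_def using rows ij \<open>i \<noteq> j\<close> gram_curvature_pos by blast
  then have "0 < t\<^sub>q" using t\<^sub>q gij unfolding q_def[symmetric] by (simp add: divide_pos_pos)
  from clipped_step_eq_upper_bound[OF bounds this t clipped]
  have t_I2: "t = min (\<theta> (off+j)) (C / real n - \<theta> (off+i))" and "t < t\<^sub>q" .
  have "0 < t" using t_I2 ij by simp
  have "t * q < g (off+j) - g (off+i)"
    using \<open>t < t\<^sub>q\<close> \<open>0 < q\<close> t\<^sub>q unfolding q_def[symmetric] by (simp add: pos_less_divide_eq)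
  then have "t * q < 2 * (g (off+j) - g (off+i))" using gij by (simp add: algebra_simps)
  then show "fobj n p k1 k2 X y A b G d \<theta>' < fobj n p k1 k2 X y A b G d \<theta>"
    unfolding \<theta>' g using lt \<open>i \<noteq> j\<close> \<open>0 < t\<close>
    by (intro fobj_pair_shift_less) (auto simp: gram_Mrow_pair_block[OF off] ij q_def g)
  have "transpose (off+i) (off+j) permutes {..<2*n}"
    using lt by (simp add: permutes_swap_id)
  then show "free_coords n C \<theta>' \<subset> free_coords n C \<theta> \<or> (\<exists>\<pi>. \<pi> permutes {..<2*n} \<and> \<theta>' = \<theta> \<circ> \<pi>)"
    using free_coords_after_clipped_step[OF lt _ bounds(1) ij(3,4) bounds(2) t_I2] \<open>i \<noteq> j\<close>
    unfolding \<theta>' by auto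
qed

lemma gamma_update_nonneg:
  assumes "0 < D3 n k1 g" "u < k1" "\<forall>s<k1. g (2*n+u) \<le> g (2*n+s)" "0 \<le> \<theta> (2*n+u)"
  shows "0 \<le> \<theta> (2*n+u) - g (2*n+u) / gram p A u u"
proof -
  have "Min ((\<lambda>s. g (2*n+s)) ` {..<k1}) = g (2*n+u)"
    using assms(2,3) by (intro Min_eqI) auto
  then have "g (2*n+u) < 0" using assms(1) by (simp add: D3_def max_def split: if_splits)
  moreover have "0 \<le> gram p A u u" unfolding gram_def by (simp add: sum_nonneg)
  ultimately have "g (2*n+u) / gram p A u u \<le> 0" by (simp add: divide_nonpos_nonneg)
  then show ?thesis using assms(4) by simp
qed

lemma smo_step_clipped_descent:
  assumes box: "box_feasible n k1 C \<theta>" and step: "smo_step n p k1 k2 X y C A b G d \<theta> \<theta>' True"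
    and rows: "\<forall>i<n. \<forall>j<n. i \<noteq> j \<longrightarrow> (\<exists>r<p. X i r \<noteq> X j r)"
  shows "fobj n p k1 k2 X y A b G d \<theta>' < fobj n p k1 k2 X y A b G d \<theta> \<and>
    (free_coords n C \<theta>' \<subset> free_coords n C \<theta> \<or> (\<exists>\<pi>. \<pi> permutes {..<2*n} \<and> \<theta>' = \<theta> \<circ> \<pi>))"
proof -
  let ?g = "grad n p k1 k2 X y A b G d \<theta>"
  have no_gamma: False if "0 < D3 n k1 ?g" "u < k1" "\<forall>s<k1. ?g (2*n+u) \<le> ?g (2*n+s)"
    "\<theta> (2*n+u) - ?g (2*n+u) / gram p A u u < 0" for u
  proof -
    have "0 \<le> \<theta> (2*n+u)" using box that(2) by (simp add: box_feasible_def)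
    from gamma_update_nonneg[of n k1 ?g u \<theta> p A, OF that(1-3) this] that(4) show False by simp
  qed
  from step have "(0 < Dpair n C 0 ?g \<theta> \<and> pair_update n p C X 0 ?g \<theta> \<theta>' True) \<or>
      (0 < Dpair n C n ?g \<theta> \<and> pair_update n p C X n ?g \<theta> \<theta>' True) \<or>
      (0 < D3 n k1 ?g \<and> (\<exists>u<k1. (\<forall>s<k1. ?g (2*n+u) \<le> ?g (2*n+s)) \<and>
         \<theta> (2*n+u) - ?g (2*n+u) / gram p A u u < 0))"
    unfolding smo_step_def Let_def by (elim conjE disjE) auto
  then show ?thesis
  proof (elim disjE conjE exE)
    assume "0 < Dpair n C 0 ?g \<theta>" "pair_update n p C X 0 ?g \<theta> \<theta>' True"
    from pair_update_clipped_descent[OF box _ refl Dpair_pos_imp_violating_pair[OF this(1)] rows this(2)]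
    show ?thesis by simp
  next
    assume "0 < Dpair n C n ?g \<theta>" "pair_update n p C X n ?g \<theta> \<theta>' True"
    from pair_update_clipped_descent[OF box _ refl Dpair_pos_imp_violating_pair[OF this(1)] rows this(2)]
    show ?thesis by simp
  qed (use no_gamma in blast)
qed

subsection \<open>Strict descent through finitely many configurations\<close>

lemma nat_seq_antimono_eventually_const:
  fixes m :: "nat \<Rightarrow> nat"
  assumes "\<And>k. m (Suc k) \<le> m k"
  shows "\<exists>K. \<forall>k\<ge>K. m k = m K"
proof -
  have "\<exists>K'\<ge>K. \<forall>k\<ge>K'. m k = m K'" for K
  proof (induction "m K" arbitrary: K rule: less_induct)
    case less
    show ?case
    proof (cases "\<forall>k\<ge>K. m k = m K")
      case False
      then obtain k where "K \<le> k" "m k \<noteq> m K" by blast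
      moreover have "m k \<le> m K" using \<open>K \<le> k\<close> by (rule lift_Suc_antimono_le[of m, OF assms])
      ultimately obtain K' where "k \<le> K'" "\<forall>k'\<ge>K'. m k' = m K'"
        using less by (metis le_neq_implies_less)
      then show ?thesis using \<open>K \<le> k\<close> order.trans by blast
    qed auto
  qed
  then show ?thesis by blast
qed

lemma no_strict_descent_by_shrinking_or_permuting:
  fixes x :: "nat \<Rightarrow> 'a \<Rightarrow> 'b" and F :: "('a \<Rightarrow> 'b) \<Rightarrow> real" and m :: "('a \<Rightarrow> 'b) \<Rightarrow> nat"
  assumes "finite S"
    and m_perm: "\<And>h \<pi>. \<pi> permutes S \<Longrightarrow> m (h \<circ> \<pi>) = m h"
    and descent: "\<And>k. F (x (Suc k)) < F (x k)"
    and step: "\<And>k. m (x (Suc k)) < m (x k) \<or> (\<exists>\<pi>. \<pi> permutes S \<and> x (Suc k) = x k \<circ> \<pi>)"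
  shows False
proof -
  have "m (x (Suc k)) \<le> m (x k)" for k
    using step[of k] m_perm by (metis order.strict_implies_order order.refl)
  then obtain K where K: "\<And>k. K \<le> k \<Longrightarrow> m (x k) = m (x K)"
    using nat_seq_antimono_eventually_const[of "m \<circ> x"] by auto
  have "\<exists>\<pi>. \<pi> permutes S \<and> x (K + k) = x K \<circ> \<pi>" for k
  proof (induction k)
    case 0
    show ?case using permutes_id by fastforce
  next
    case (Suc k)
    then obtain \<pi> where \<pi>: "\<pi> permutes S" "x (K + k) = x K \<circ> \<pi>" by blast
    have "m (x (Suc (K + k))) = m (x (K + k))" using K[of "K + k"] K[of "Suc (K + k)"] by simp
    then obtain \<sigma> where "\<sigma> permutes S" "x (Suc (K + k)) = x (K + k) \<circ> \<sigma>"
      using step[of "K + k"] by auto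
    moreover have "\<pi> \<circ> \<sigma> permutes S" using \<open>\<sigma> permutes S\<close> \<pi>(1) by (rule permutes_compose)
    ultimately show ?case using \<pi>(2) by (metis add_Suc_right comp_assoc)
  qed
  then have "range (\<lambda>k. x (K + k)) \<subseteq> (\<lambda>\<pi>. x K \<circ> \<pi>) ` {\<pi>. \<pi> permutes S}" by blast
  then have "finite (range (\<lambda>k. x (K + k)))"
    using finite_permutations[OF \<open>finite S\<close>] finite_subset by blast
  moreover have "inj (\<lambda>k. x (K + k))"
  proof (rule injI)
    fix i j assume "x (K + i) = x (K + j)"
    moreover have "F (x (K + j)) < F (x (K + i))" if "i < j" for i j
      using lift_Suc_mono_less[of "\<lambda>k. - F (x (K + k))"] descent that by simp
    ultimately show "i = j" by (metis less_irrefl neqE)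
  qed
  ultimately show False using range_inj_infinite by blast
qed

theorem lemmaD3:
  fixes n p k1 k2 :: nat
    and X A G :: "nat \<Rightarrow> nat \<Rightarrow> real"
    and y b d :: "nat \<Rightarrow> real"
    and C \<nu> :: real
    and \<theta> :: "nat \<Rightarrow> nat \<Rightarrow> real"
    and cl :: "nat \<Rightarrow> bool"
  assumes "1 \<le> n" "1 \<le> p" "1 \<le> k1" "1 \<le> k2"
    and "0 < C" "0 < \<nu>" "\<nu> \<le> 1"
    and "\<forall>i<n. \<forall>j<n. i \<noteq> j \<longrightarrow> (\<exists>r<p. X i r \<noteq> X j r)"
    and "\<forall>s<k1. \<exists>r<p. A s r \<noteq> 0"
    and "\<forall>s<k2. \<exists>r<p. G s r \<noteq> 0"
    and "feasible n k1 C \<nu> (\<theta> 0)"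
    and "\<forall>k. smo_step n p k1 k2 X y C A b G d (\<theta> k) (\<theta> (Suc k)) (cl k)"
  shows "infinite {k. \<not> cl k}"
proof
  assume "finite {k. \<not> cl k}"
  then obtain K where "\<forall>k\<in>{k. \<not> cl k}. k < K"
    using finite_nat_set_iff_bounded by blast
  then have clipped: "cl (K + k)" for k by auto
  have box: "box_feasible n k1 C (\<theta> k)" for k
  proof (induction k)
    case 0
    show ?case using assms(11) by (rule feasible_imp_box_feasible)
  next
    case (Suc k)
    show ?case using Suc assms(12)[rule_format, of k] by (rule smo_step_box_feasible)
  qed
  have "smo_step n p k1 k2 X y C A b G d (\<theta> (K + k)) (\<theta> (K + Suc k)) True" for k
    using assms(12)[rule_format, of "K + k"] clipped[of k] by simp
  note descent = smo_step_clipped_descent[OF box this assms(8)]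
  show False
  proof (rule no_strict_descent_by_shrinking_or_permuting[where x = "\<lambda>k. \<theta> (K + k)"
      and F = "fobj n p k1 k2 X y A b G d" and m = "\<lambda>h. card (free_coords n C h)"])
    show "finite {..<2*n}" by simp
    show "card (free_coords n C (h \<circ> \<pi>)) = card (free_coords n C h)" if "\<pi> permutes {..<2*n}" for h \<pi>
      using that by (rule card_free_coords_comp_permutes)
    show "fobj n p k1 k2 X y A b G d (\<theta> (K + Suc k)) < fobj n p k1 k2 X y A b G d (\<theta> (K + k))" for k
      using descent[of k] by (rule conjunct1)
    show "card (free_coords n C (\<theta> (K + Suc k))) < card (free_coords n C (\<theta> (K + k))) \<or>
        (\<exists>\<pi>. \<pi> permutes {..<2*n} \<and> \<theta> (K + Suc k) = \<theta> (K + k) \<circ> \<pi>)" for k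
      using conjunct2[OF descent[of k]] psubset_card_mono[OF finite_free_coords] by (elim disjE) auto
  qed
qed

end
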